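(* Consider a wireless localization network with $n$ anchors and $N_a$ agents. For each agent $k\in\{1,\dots,N_a\}$ let $\phi_{k1},\dots,\phi_{kn}\in\mathbb{R}$, $\xi_{k1},\dots,\xi_{kn}\ge 0$ and a localization requirement $\varrho_k>0$ be given; let $\mathbf{R}_k=\operatorname{diag}\{\xi_{k1},\dots,\xi_{kn}\}$, $\mathbf{c}_k=[\cos2\phi_{k1},\dots,\cos2\phi_{kn}]^{\mathsf T}$, $\mathbf{s}_k=[\sin2\phi_{k1},\dots,\sin2\phi_{kn}]^{\mathsf T}$. For $\mathbf{x}\in\mathbb{R}^n$, $\mathbf{x}\succeq\mathbf{0}$, define $\mathcal{P}(\mathbf{p}_k;\mathbf{x})=\operatorname{tr}\{(\sum_{j=1}^n x_j\xi_{kj}\mathbf{u}(\phi_{kj})\mathbf{u}(\phi_{kj})^{\mathsf T})^{-1}\}$ (equal to $+\infty$ if the matrix is singular). Let $c_1,\dots,c_L$ be affine functions on $\mathbb{R}^n$. Then the problem $$\min_{\mathbf{x}\succeq\mathbf{0}}\ \mathbf{1}^{\mathsf T}\mathbf{x}\quad\text{s.t.}\quad \mathcal{P}(\mathbf{p}_k;\mathbf{x})\le\varrho_k\ \ \forall k,\qquad c_l(\mathbf{x})\le 0\ \ (l=1,\dots,L)$$ is equivalent to the second-order cone program $$\min_{\mathbf{x}\succeq\mathbf{0}}\ \mathbf{1}^{\mathsf T}\mathbf{x}\quad\text{s.t.}\quad \big\|\mathbf{A}_k\mathbf{R}_k\mathbf{x}+\mathbf{b}_k\big\|\le \mathbf{1}^{\mathsf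 T}\mathbf{R}_k\mathbf{x}-2\varrho_k^{-1}\ \ \forall k,\qquad c_l(\mathbf{x})\le 0\ \ (l=1,\dots,L),$$ where $\mathbf{A}_k=[\mathbf{c}_k\ \ \mathbf{s}_k\ \ \mathbf{0}]^{\mathsf T}\in\mathbb{R}^{3\times n}$ and $\mathbf{b}_k=[0\ \ 0\ \ 2\varrho_k^{-1}]^{\mathsf T}$.
   Context: $\mathbf{u}(\phi)=[\cos\phi\ \ \sin\phi]^{\mathsf T}$; $\mathbf{1}$ is the all-ones vector, $\mathbf{0}$ the zero vector; $\|\cdot\|$ is the Euclidean norm; $\mathbf{x}\succeq\mathbf{0}$ means entrywise nonnegative. $\mathbf{x}$ is the vector of anchor transmit powers and $\mathcal{P}(\mathbf{p}_k;\mathbf{x})$ is the squared position error bound of agent $k$. "Equivalent" means the two problems have the same feasible set (and objective). *)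

theory Defs
  imports "HOL-Analysis.Analysis"
begin

definition uvec :: "real \<Rightarrow> real^2" where
  "uvec \<phi> = vector [cos \<phi>, sin \<phi>]"

definition EFIM :: "('n::finite \<Rightarrow> real) \<Rightarrow> ('n \<Rightarrow> real) \<Rightarrow> real^'n \<Rightarrow> real^2^2" where
  "EFIM \<phi> \<xi> x = (\<chi> a b. \<Sum>j\<in>UNIV. x$j * \<xi> j * (uvec (\<phi> j))$a * (uvec (\<phi> j))$b)"

definition PEB :: "('n::finite \<Rightarrow> real) \<Rightarrow> ('n \<Rightarrow> real) \<Rightarrow> real^'n \<Rightarrow> ereal" where
  "PEB \<phi> \<xi> x = (if invertible (EFIM \<phi> \<xi> x) then ereal (trace (matrix_inv (EFIM \<phi> \<xi> x))) else \<infinity>)"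

definition Rmat :: "('n::finite \<Rightarrow> real) \<Rightarrow> real^'n^'n" where
  "Rmat \<xi> = (\<chi> i j. if i = j then \<xi> i else 0)"

definition Amat :: "('n::finite \<Rightarrow> real) \<Rightarrow> real^'n^3" where
  "Amat \<phi> = vector [(\<chi> j. cos (2 * \<phi> j)), (\<chi> j. sin (2 * \<phi> j)), 0]"

definition bvec :: "real \<Rightarrow> real^3" where
  "bvec \<rho> = vector [0, 0, 2 / \<rho>]"

definition ones :: "real^'n::finite" where
  "ones = (\<chi> i. 1)"

definition nonneg :: "real^'n::finite \<Rightarrow> bool" where
  "nonneg x \<longleftrightarrow> (\<forall>j. 0 \<le> x$j)"

definition feasible_orig ::
  "nat \<Rightarrow> (nat \<Rightarrow> 'n::finite \<Rightarrow> real) \<Rightarrow> (nat \<Rightarrow> 'n \<Rightarrow> real) \<Rightarrow> (nat \<Rightarrow> real)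
   \<Rightarrow> nat \<Rightarrow> (nat \<Rightarrow> real^'n) \<Rightarrow> (nat \<Rightarrow> real) \<Rightarrow> (real^'n) set" where
  "feasible_orig Na \<phi> \<xi> \<rho> L a d =
     {x. nonneg x \<and> (\<forall>k<Na. PEB (\<phi> k) (\<xi> k) x \<le> ereal (\<rho> k))
         \<and> (\<forall>l<L. a l \<bullet> x + d l \<le> 0)}"

definition feasible_socp ::
  "nat \<Rightarrow> (nat \<Rightarrow> 'n::finite \<Rightarrow> real) \<Rightarrow> (nat \<Rightarrow> 'n \<Rightarrow> real) \<Rightarrow> (nat \<Rightarrow> real)
   \<Rightarrow> nat \<Rightarrow> (nat \<Rightarrow> real^'n) \<Rightarrow> (nat \<Rightarrow> real) \<Rightarrow> (real^'n) set" where
  "feasible_socp Na \<phi> \<xi> \<rho> L a d =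
     {x. nonneg x \<and> (\<forall>k<Na. norm (Amat (\<phi> k) *v (Rmat (\<xi> k) *v x) + bvec (\<rho> k))
                              \<le> ones \<bullet> (Rmat (\<xi> k) *v x) - 2 / \<rho> k)
         \<and> (\<forall>l<L. a l \<bullet> x + d l \<le> 0)}"

end

theory Submission
  imports Defs
begin

text \<open>
  With weights \<open>w\<^sub>j = x\<^sub>j \<xi>\<^sub>k\<^sub>j\<close> and the double-angle formulas, the Fisher information
  matrix is \<open>J = \<onehalf>[[S + C, T], [T, S - C]]\<close> where \<open>S = \<Sum>w\<^sub>j\<close>, \<open>C = \<Sum>w\<^sub>j cos 2\<phi>\<^sub>j\<close>,
  \<open>T = \<Sum>w\<^sub>j sin 2\<phi>\<^sub>j\<close>. Hence \<open>tr J\<^sup>-\<^sup>1 = 4S / (S\<^sup>2 - C\<^sup>2 - T\<^sup>2)\<close>, and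
  \<open>C\<^sup>2 + T\<^sup>2 \<le> S\<^sup>2\<close> by the triangle inequality for \<open>\<Sum>w\<^sub>j exp (2i\<phi>\<^sub>j)\<close>. The requirement
  \<open>4S/(S\<^sup>2 - C\<^sup>2 - T\<^sup>2) \<le> \<rho>\<close> is then \<open>C\<^sup>2 + T\<^sup>2 + (2/\<rho>)\<^sup>2 \<le> (S - 2/\<rho>)\<^sup>2\<close> with
  \<open>S \<ge> 2/\<rho>\<close>, i.e. the cone constraint \<open>\<parallel>(C, T, 2/\<rho>)\<parallel> \<le> S - 2/\<rho>\<close>.
\<close>

lemma matrix_inv_unique:
  fixes A :: "'a::semiring_1^'n^'m"
  assumes "A ** B = mat 1" and "B ** A = mat 1"
  shows "matrix_inv A = B"
proof -
  have inv: "A ** matrix_inv A = mat 1 \<and> matrix_inv A ** A = mat 1"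
    unfolding matrix_inv_def by (rule someI[of _ B]) (use assms in simp)
  have "matrix_inv A = matrix_inv A ** (A ** B)"
    using assms(1) by simp
  also have "\<dots> = B"
    using inv by (simp add: matrix_mul_assoc)
  finally show ?thesis .
qed

lemma trace_matrix_inv_2x2:
  fixes J :: "real^2^2"
  assumes "det J \<noteq> 0"
  shows "trace (matrix_inv J) = trace J / det J"
proof -
  define adj :: "real^2^2" where "adj = vector [vector [J$2$2, - J$1$2], vector [- J$2$1, J$1$1]]"
  have "J ** adj = det J *\<^sub>R mat 1" and "adj ** J = det J *\<^sub>R mat 1"
    by (simp_all add: adj_def matrix_matrix_mult_def vec_eq_iff forall_2 sum_2 det_2 mat_def)
  then have "J ** ((1 / det J) *\<^sub>R adj) = mat 1" and "(1 / det J) *\<^sub>R adj ** J = mat 1"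
    using assms by (simp_all add: matrix_scalar_ac scalar_matrix_assoc[symmetric])
  then have "matrix_inv J = (1 / det J) *\<^sub>R adj"
    by (rule matrix_inv_unique)
  then show ?thesis
    by (simp add: adj_def trace_def sum_2 add_divide_distrib)
qed

lemma sum_cos_sin_power2_le:
  fixes w \<theta> :: "'a \<Rightarrow> real"
  assumes "\<And>j. j \<in> A \<Longrightarrow> 0 \<le> w j"
  shows "(\<Sum>j\<in>A. w j * cos (\<theta> j))\<^sup>2 + (\<Sum>j\<in>A. w j * sin (\<theta> j))\<^sup>2 \<le> (\<Sum>j\<in>A. w j)\<^sup>2"
proof -
  define z where "z = (\<Sum>j\<in>A. of_real (w j) * cis (\<theta> j))"
  have "cmod z \<le> (\<Sum>j\<in>A. cmod (of_real (w j) * cis (\<theta> j)))"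
    unfolding z_def by (rule norm_sum)
  also have "\<dots> = (\<Sum>j\<in>A. w j)"
    using assms by (intro sum.cong) (simp_all add: norm_mult)
  finally have "(cmod z)\<^sup>2 \<le> (\<Sum>j\<in>A. w j)\<^sup>2"
    by (simp add: power_mono)
  then show ?thesis
    by (simp add: cmod_power2 z_def Re_sum Im_sum)
qed

lemma uvec_nth_products:
  "uvec \<theta> $1 * uvec \<theta> $1 = (1 + cos (2 * \<theta>)) / 2"
  "uvec \<theta> $2 * uvec \<theta> $2 = (1 - cos (2 * \<theta>)) / 2"
  "uvec \<theta> $1 * uvec \<theta> $2 = sin (2 * \<theta>) / 2"
  "uvec \<theta> $2 * uvec \<theta> $1 = sin (2 * \<theta>) / 2"
  by (simp_all add: uvec_def cos_double_cos sin_double power2_eq_square) (smt (verit) sin_cos_squared_add3)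

lemma EFIM_nth:
  fixes \<phi> \<xi> :: "'n::finite \<Rightarrow> real" and x :: "real^'n"
  defines "w \<equiv> \<lambda>j. x$j * \<xi> j"
  shows "EFIM \<phi> \<xi> x $1$1 = ((\<Sum>j\<in>UNIV. w j) + (\<Sum>j\<in>UNIV. w j * cos (2 * \<phi> j))) / 2"
    and "EFIM \<phi> \<xi> x $2$2 = ((\<Sum>j\<in>UNIV. w j) - (\<Sum>j\<in>UNIV. w j * cos (2 * \<phi> j))) / 2"
    and "EFIM \<phi> \<xi> x $1$2 = (\<Sum>j\<in>UNIV. w j * sin (2 * \<phi> j)) / 2"
    and "EFIM \<phi> \<xi> x $2$1 = (\<Sum>j\<in>UNIV. w j * sin (2 * \<phi> j)) / 2"
  unfolding EFIM_def vec_lambda_beta mult.assoc[of "_ * _"] uvec_nth_products w_def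
  by (simp_all add: sum_divide_distrib sum.distrib[symmetric] sum_subtractf[symmetric] add_divide_distrib[symmetric]
      diff_divide_distrib[symmetric] algebra_simps)

lemma PEB_eq:
  fixes \<phi> \<xi> :: "'n::finite \<Rightarrow> real" and x :: "real^'n"
  defines "w \<equiv> \<lambda>j. x$j * \<xi> j"
  defines "S \<equiv> \<Sum>j\<in>UNIV. w j"
    and "C \<equiv> \<Sum>j\<in>UNIV. w j * cos (2 * \<phi> j)"
    and "T \<equiv> \<Sum>j\<in>UNIV. w j * sin (2 * \<phi> j)"
  shows "PEB \<phi> \<xi> x = (if S\<^sup>2 - C\<^sup>2 - T\<^sup>2 = 0 then \<infinity> else ereal (4 * S / (S\<^sup>2 - C\<^sup>2 - T\<^sup>2)))"
proof -
  have det: "det (EFIM \<phi> \<xi> x) = (S\<^sup>2 - C\<^sup>2 - T\<^sup>2) / 4"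
    by (simp add: det_2 EFIM_nth S_def C_def T_def w_def power2_eq_square field_simps)
  have trace: "trace (EFIM \<phi> \<xi> x) = S"
    by (simp add: trace_def sum_2 EFIM_nth S_def w_def field_simps)
  show ?thesis
    by (simp add: PEB_def invertible_det_nz trace_matrix_inv_2x2 det trace mult.commute)
qed

lemma inverse_trace_bound_iff:
  fixes S C T \<rho> :: real
  assumes "0 \<le> S" and "C\<^sup>2 + T\<^sup>2 \<le> S\<^sup>2" and "0 < \<rho>"
  shows "(S\<^sup>2 - C\<^sup>2 - T\<^sup>2 \<noteq> 0 \<and> 4 * S / (S\<^sup>2 - C\<^sup>2 - T\<^sup>2) \<le> \<rho>) \<longleftrightarrow>
         0 < S \<and> 4 * S \<le> \<rho> * (S\<^sup>2 - C\<^sup>2 - T\<^sup>2)"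
proof
  assume *: "S\<^sup>2 - C\<^sup>2 - T\<^sup>2 \<noteq> 0 \<and> 4 * S / (S\<^sup>2 - C\<^sup>2 - T\<^sup>2) \<le> \<rho>"
  then have pos: "0 < S\<^sup>2 - C\<^sup>2 - T\<^sup>2"
    using assms(2) by linarith
  then have "0 < S\<^sup>2"
    using zero_le_power2[of C] zero_le_power2[of T] by linarith
  then have "S \<noteq> 0"
    by auto
  with * pos assms(1) show "0 < S \<and> 4 * S \<le> \<rho> * (S\<^sup>2 - C\<^sup>2 - T\<^sup>2)"
    by (simp add: pos_divide_le_eq mult.commute)
next
  assume *: "0 < S \<and> 4 * S \<le> \<rho> * (S\<^sup>2 - C\<^sup>2 - T\<^sup>2)"
  then have "0 < \<rho> * (S\<^sup>2 - C\<^sup>2 - T\<^sup>2)"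
    by linarith
  then have "0 < S\<^sup>2 - C\<^sup>2 - T\<^sup>2"
    using assms(3) by (rule zero_less_mult_pos)
  with * show "S\<^sup>2 - C\<^sup>2 - T\<^sup>2 \<noteq> 0 \<and> 4 * S / (S\<^sup>2 - C\<^sup>2 - T\<^sup>2) \<le> \<rho>"
    by (simp add: pos_divide_le_eq mult.commute)
qed

lemma cone_constraint_iff:
  fixes S C T \<rho> :: real
  assumes "0 < \<rho>"
  shows "sqrt (C\<^sup>2 + T\<^sup>2 + (2 / \<rho>)\<^sup>2) \<le> S - 2 / \<rho> \<longleftrightarrow>
         0 < S \<and> 4 * S \<le> \<rho> * (S\<^sup>2 - C\<^sup>2 - T\<^sup>2)"
proof -
  have square: "(S - 2 / \<rho>)\<^sup>2 = S\<^sup>2 - 4 * S / \<rho> + (2 / \<rho>)\<^sup>2"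
    by (simp add: power2_diff)
  have scaled: "4 * S / \<rho> \<le> S\<^sup>2 - C\<^sup>2 - T\<^sup>2 \<longleftrightarrow> 4 * S \<le> \<rho> * (S\<^sup>2 - C\<^sup>2 - T\<^sup>2)"
    using assms by (simp add: pos_divide_le_eq mult.commute)
  show ?thesis
  proof
    assume le: "sqrt (C\<^sup>2 + T\<^sup>2 + (2 / \<rho>)\<^sup>2) \<le> S - 2 / \<rho>"
    have "0 < 2 / \<rho>" and "0 \<le> sqrt (C\<^sup>2 + T\<^sup>2 + (2 / \<rho>)\<^sup>2)"
      using assms by simp_all
    with le have "0 < S"
      by linarith
    moreover have "C\<^sup>2 + T\<^sup>2 + (2 / \<rho>)\<^sup>2 \<le> (S - 2 / \<rho>)\<^sup>2"
      using le by (rule sqrt_le_D)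
    ultimately show "0 < S \<and> 4 * S \<le> \<rho> * (S\<^sup>2 - C\<^sup>2 - T\<^sup>2)"
      using square scaled by linarith
  next
    assume *: "0 < S \<and> 4 * S \<le> \<rho> * (S\<^sup>2 - C\<^sup>2 - T\<^sup>2)"
    then have bound: "4 * S / \<rho> \<le> S\<^sup>2 - C\<^sup>2 - T\<^sup>2"
      using scaled by blast
    then have "4 * S / \<rho> \<le> S\<^sup>2"
      using zero_le_power2[of C] zero_le_power2[of T] by linarith
    then have "S * (4 / \<rho>) \<le> S * S"
      by (simp add: power2_eq_square mult.commute)
    with * have "4 / \<rho> \<le> S"
      using mult_le_cancel_left_pos by blast
    moreover have "2 / \<rho> \<le> 4 / \<rho>"
      using assms by (simp add: divide_right_mono)
    ultimately have "0 \<le> S - 2 / \<rho>"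
      by linarith
    moreover have "C\<^sup>2 + T\<^sup>2 + (2 / \<rho>)\<^sup>2 \<le> (S - 2 / \<rho>)\<^sup>2"
      using square bound by linarith
    ultimately show "sqrt (C\<^sup>2 + T\<^sup>2 + (2 / \<rho>)\<^sup>2) \<le> S - 2 / \<rho>"
      by (rule real_le_lsqrt)
  qed
qed

lemma Rmat_mult_vec: "Rmat \<xi> *v x = (\<chi> j. x$j * \<xi> j)"
  by (simp add: Rmat_def matrix_vector_mult_def vec_eq_iff if_distrib[of "\<lambda>c. c * _"] cong: if_cong)

lemma ones_inner: "ones \<bullet> w = (\<Sum>j\<in>UNIV. w$j)"
  by (simp add: ones_def inner_vec_def)

lemma norm_Amat_mult_vec_add_bvec:
  "norm (Amat \<phi> *v w + bvec \<rho>) =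
     sqrt ((\<Sum>j\<in>UNIV. w$j * cos (2 * \<phi> j))\<^sup>2 + (\<Sum>j\<in>UNIV. w$j * sin (2 * \<phi> j))\<^sup>2 + (2 / \<rho>)\<^sup>2)"
  by (simp add: norm_eq_sqrt_inner inner_vec_def sum_3 Amat_def bvec_def matrix_vector_mult_def
      power2_eq_square mult.commute)

lemma PEB_le_iff_cone_constraint:
  fixes \<phi> \<xi> :: "'n::finite \<Rightarrow> real" and x :: "real^'n"
  assumes "\<And>j. 0 \<le> \<xi> j" and "nonneg x" and "0 < \<rho>"
  shows "PEB \<phi> \<xi> x \<le> ereal \<rho> \<longleftrightarrow>
         norm (Amat \<phi> *v (Rmat \<xi> *v x) + bvec \<rho>) \<le> ones \<bullet> (Rmat \<xi> *v x) - 2 / \<rho>"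
proof -
  define w where "w j = x$j * \<xi> j" for j
  define S where "S = (\<Sum>j\<in>UNIV. w j)"
  define C where "C = (\<Sum>j\<in>UNIV. w j * cos (2 * \<phi> j))"
  define T where "T = (\<Sum>j\<in>UNIV. w j * sin (2 * \<phi> j))"
  have w_nonneg: "0 \<le> w j" for j
    using assms(1,2) by (simp add: w_def nonneg_def)
  then have "C\<^sup>2 + T\<^sup>2 \<le> S\<^sup>2"
    unfolding C_def T_def S_def by (rule sum_cos_sin_power2_le)
  moreover have "0 \<le> S"
    unfolding S_def using w_nonneg by (rule sum_nonneg)
  moreover have "PEB \<phi> \<xi> x = (if S\<^sup>2 - C\<^sup>2 - T\<^sup>2 = 0 then \<infinity> else ereal (4 * S / (S\<^sup>2 - C\<^sup>2 - T\<^sup>2)))"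
    unfolding S_def C_def T_def w_def by (rule PEB_eq)
  ultimately have "PEB \<phi> \<xi> x \<le> ereal \<rho> \<longleftrightarrow> 0 < S \<and> 4 * S \<le> \<rho> * (S\<^sup>2 - C\<^sup>2 - T\<^sup>2)"
    using assms(3) by (simp flip: inverse_trace_bound_iff)
  also have "\<dots> \<longleftrightarrow> sqrt (C\<^sup>2 + T\<^sup>2 + (2 / \<rho>)\<^sup>2) \<le> S - 2 / \<rho>"
    using assms(3) by (rule cone_constraint_iff[symmetric])
  also have "\<dots> \<longleftrightarrow> norm (Amat \<phi> *v (Rmat \<xi> *v x) + bvec \<rho>) \<le> ones \<bullet> (Rmat \<xi> *v x) - 2 / \<rho>"
    unfolding Rmat_mult_vec norm_Amat_mult_vec_add_bvec ones_inner vec_lambda_beta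
    by (simp only: w_def S_def C_def T_def)
  finally show ?thesis .
qed

theorem proposition3:
  fixes Na L :: nat
    and \<phi> \<xi> :: "nat \<Rightarrow> 'n::finite \<Rightarrow> real"
    and \<rho> :: "nat \<Rightarrow> real"
    and a :: "nat \<Rightarrow> real^'n" and d :: "nat \<Rightarrow> real"
  assumes "\<And>k j. k < Na \<Longrightarrow> 0 \<le> \<xi> k j"
    and "\<And>k. k < Na \<Longrightarrow> 0 < \<rho> k"
  shows "feasible_orig Na \<phi> \<xi> \<rho> L a d = feasible_socp Na \<phi> \<xi> \<rho> L a d"
  using assms by (auto simp: feasible_orig_def feasible_socp_def PEB_le_iff_cone_constraint)

end
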